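(* For all $\lambda j$-terms $t$, $u_1,\dots,u_m$ ($m\ge1$), $v_1,\dots,v_n$ ($n\ge0$) and pairwise distinct variables $x_1,\dots,x_m$ such that no $x_i$ is free in any $u_j$: if $u_1,\dots,u_m$ are $\lambda j$-strongly normalizing and $t\{x_1/u_1\}\cdots\{x_m/u_m\}\,v_1\cdots v_n$ is $\lambda j$-strongly normalizing, then $t[x_1/u_1]\cdots[x_m/u_m]\,v_1\cdots v_n$ is $\lambda j$-strongly normalizing.
   Context: $\lambda j$-terms are generated by $t,u::= x\mid \lambda x.t\mid t\,u\mid t[x/u]$ ($x$ ranging over variables); $\lambda x.t$ and $t[x/u]$ bind $x$ in $t$ (not in $u$), and terms are considered modulo $\alpha$-conversion. $\mathrm{fv}(t)$ is the set of free variables, $t\{x/u\}$ is capture-avoiding meta-level substitution, and $|t|_x$ is the number of free occurrences of $x$ in $t$. Application associates to the left: $t\,v_1\cdots v_n=(\dots(t\,v_1)\dots)v_n$. If $|t|_x=n\ge2$, $t_{[y]_x}$ denotes any term obtained from $t$ by replacing $k$ of the free occurrences of $x$ by a fresh variable $y$, for some $1\le k\le n-1$. ${\tt L}$ denotes a (possibly empty) list of jumps $[x_1/u_1]\dots[x_k/u_k]$. The rewriting rules, closed under all contexts, are: $({\tt dB})$ $(\lambda x.t){\tt L}\,u\to t[x/u]{\tt L}$ where no $x_i$ of ${\tt L}$ is free in $u$; $({\tt w})$ $t[x/u]\to t$ if $|t|_x=0$; $({\tt d})$ $t[x/u]\to t\{x/u\}$ if $|t|_x=1$; $({\tt c})$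 $t[x/u]\to t_{[y]_x}[x/u][y/u]$ if $|t|_x\ge2$, $y$ fresh. $\to_{\lambda j}$ is the union of all four. A term is $\lambda j$-strongly normalizing if it has no infinite $\to_{\lambda j}$-reduction sequence. *)

theory Defs
  imports Main
begin

(* lambda-j terms modulo alpha-conversion, in de Bruijn representation.
   Var i   : variable with de Bruijn index i
   Lam t   : \<lambda>x.t          (binds index 0 in t)
   App t u : t u
   Sub t u : t[x/u]        (binds index 0 in t, not in u) *)
datatype trm = Var nat | Lam trm | App trm trm | Sub trm trm

fun lift :: "nat \<Rightarrow> nat \<Rightarrow> trm \<Rightarrow> trm" where
  "lift k c (Var i) = (if i < c then Var i else Var (i + k))"
| "lift k c (Lam t) = Lam (lift k (Suc c) t)"
| "lift k c (App t u) = App (lift k c t) (lift k c u)"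
| "lift k c (Sub t u) = Sub (lift k (Suc c) t) (lift k c u)"

fun subst :: "trm \<Rightarrow> nat \<Rightarrow> trm \<Rightarrow> trm" where
  "subst (Var i) k s = (if k < i then Var (i - 1) else if i = k then s else Var i)"
| "subst (Lam t) k s = Lam (subst t (Suc k) (lift 1 0 s))"
| "subst (App t u) k s = App (subst t k s) (subst u k s)"
| "subst (Sub t u) k s = Sub (subst t (Suc k) (lift 1 0 s)) (subst u k s)"

fun occ :: "nat \<Rightarrow> trm \<Rightarrow> nat" where
  "occ k (Var i) = (if i = k then 1 else 0)"
| "occ k (Lam t) = occ (Suc k) t"
| "occ k (App t u) = occ k t + occ k u"
| "occ k (Sub t u) = occ (Suc k) t + occ k u"

(* split d t t' : t' arises from t by inserting a new variable y at index d+1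
   (the variable x being index d) and renaming some of the free occurrences of x to y *)
inductive split :: "nat \<Rightarrow> trm \<Rightarrow> trm \<Rightarrow> bool" where
  split_lt: "i < d \<Longrightarrow> split d (Var i) (Var i)"
| split_keep: "split d (Var d) (Var d)"
| split_ren: "split d (Var d) (Var (Suc d))"
| split_gt: "d < i \<Longrightarrow> split d (Var i) (Var (Suc i))"
| split_Lam: "split (Suc d) t t' \<Longrightarrow> split d (Lam t) (Lam t')"
| split_App: "split d t t' \<Longrightarrow> split d u u' \<Longrightarrow> split d (App t u) (App t' u')"
| split_Sub: "split (Suc d) t t' \<Longrightarrow> split d u u' \<Longrightarrow> split d (Sub t u) (Sub t' u')"

(* the lambda-j reduction relation, closed under all contexts.
   foldl Sub s L  is  s L  for a list of jumps L = [x1/u1]...[xk/uk] *)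
inductive step :: "trm \<Rightarrow> trm \<Rightarrow> bool" where
  dB: "step (App (foldl Sub (Lam t) L) u) (foldl Sub (Sub t (lift (length L) 0 u)) L)"
| w: "occ 0 t = 0 \<Longrightarrow> step (Sub t u) (subst t 0 u)"
| d: "occ 0 t = 1 \<Longrightarrow> step (Sub t u) (subst t 0 u)"
| c: "2 \<le> occ 0 t \<Longrightarrow> split 0 t t' \<Longrightarrow> 1 \<le> occ 0 t' \<Longrightarrow> 1 \<le> occ 1 t' \<Longrightarrow>
      step (Sub t u) (Sub (Sub t' (lift 1 0 u)) u)"
| lam: "step t t' \<Longrightarrow> step (Lam t) (Lam t')"
| appL: "step t t' \<Longrightarrow> step (App t u) (App t' u)"
| appR: "step u u' \<Longrightarrow> step (App t u) (App t u')"
| subL: "step t t' \<Longrightarrow> step (Sub t u) (Sub t' u)"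
| subR: "step u u' \<Longrightarrow> step (Sub t u) (Sub t u')"

definition SN :: "trm \<Rightarrow> bool" where
  "SN t \<longleftrightarrow> \<not> (\<exists>f. f 0 = t \<and> (\<forall>i. step (f i) (f (Suc i))))"

(* t[x1/u1]...[xm/um] where t lives under the m binders x1 (index 0) ... xm (index m-1)
   and the u_j are given in the outer context (no x_i free in u_j): u_j is lifted over
   the binders x_{j+1},...,x_m that scope over it *)
fun jumps :: "trm \<Rightarrow> trm list \<Rightarrow> trm" where
  "jumps t [] = t"
| "jumps t (u # us) = jumps (Sub t (lift (length us) 0 u)) us"

(* t{x1/u1}...{xm/um}, same conventions *)
fun msubsts :: "trm \<Rightarrow> trm list \<Rightarrow> trm" where
  "msubsts t [] = t"
| "msubsts t (u # us) = msubsts (subst t 0 (lift (length us) 0 u)) us"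

end

theory Submission
  imports Defs "HOL-Library.Multiset"
begin

(*
  1. A small calculus of renamings (ren) and parallel substitutions (psubst) on
     de Bruijn terms, into which lift, subst and msubsts are translated.  It
     yields that reduction is stable under substitution and that a lifted term
     (a jump argument) only has lifted reducts.
  2. SN is characterised inductively (SNa: all reducts are SNa).
  3. Every reduct of  jumps t us v1...vn  is again of the form
     jumps t' us' v1'...vn'  with SN arguments us', and either the
     corresponding substituted term  msubsts t' us' v1'...vn'  is a proper reduct
     of the old one, or it is a reduct-or-equal and the jump measure decreases.
     The jump measure pairs the multiset of the us (each counted once per
     occurrence of its variable, at least once), ordered by the multiset
     extension of reduction on SN terms, with the sum of the squares of the
     occurrence numbers; the latter decreases under duplication (rule c).
  4. The theorem follows by well-founded induction on the lexicographic
     combination of reduction on the substituted term and the jump measure.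
*)

section \<open>Renamings and parallel substitutions\<close>

fun upr :: "(nat \<Rightarrow> nat) \<Rightarrow> nat \<Rightarrow> nat" where
  "upr f 0 = 0" | "upr f (Suc i) = Suc (f i)"

primrec ren :: "(nat \<Rightarrow> nat) \<Rightarrow> trm \<Rightarrow> trm" where
  "ren f (Var i) = Var (f i)"
| "ren f (Lam t) = Lam (ren (upr f) t)"
| "ren f (App t u) = App (ren f t) (ren f u)"
| "ren f (Sub t u) = Sub (ren (upr f) t) (ren f u)"

fun ups :: "(nat \<Rightarrow> trm) \<Rightarrow> nat \<Rightarrow> trm" where
  "ups s 0 = Var 0" | "ups s (Suc i) = ren Suc (s i)"

primrec psubst :: "(nat \<Rightarrow> trm) \<Rightarrow> trm \<Rightarrow> trm" where
  "psubst s (Var i) = s i"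
| "psubst s (Lam t) = Lam (psubst (ups s) t)"
| "psubst s (App t u) = App (psubst s t) (psubst s u)"
| "psubst s (Sub t u) = Sub (psubst (ups s) t) (psubst s u)"

primrec upsn :: "nat \<Rightarrow> (nat \<Rightarrow> trm) \<Rightarrow> nat \<Rightarrow> trm" where
  "upsn 0 s = s" | "upsn (Suc n) s = ups (upsn n s)"

lemma upr_comp: "upr f \<circ> upr g = upr (f \<circ> g)"
  by (rule ext, case_tac x) auto

lemma ren_ren: "ren f (ren g t) = ren (f \<circ> g) t"
  by (induction t arbitrary: f g) (auto simp: upr_comp)

lemma upr_ident: "upr (\<lambda>i. i) = (\<lambda>i. i)"
proof
  fix x :: nat show "upr (\<lambda>i. i) x = x" by (cases x) auto
qed

lemma ren_ident: "ren (\<lambda>i. i) t = t"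
  by (induction t) (auto simp: upr_ident)

lemma ups_upr: "ups s \<circ> upr f = ups (s \<circ> f)"
  by (rule ext, case_tac x) auto

lemma psubst_ren: "psubst s (ren f t) = psubst (s \<circ> f) t"
  by (induction t arbitrary: s f) (auto simp: ups_upr)

lemma ren_ups: "ren (upr f) \<circ> ups s = ups (ren f \<circ> s)"
  by (rule ext, case_tac x) (auto simp: ren_ren comp_def)

lemma ren_psubst: "ren f (psubst s t) = psubst (ren f \<circ> s) t"
  by (induction t arbitrary: s f) (auto simp: ren_ups)

lemma ups_comp: "psubst (ups s) \<circ> ups r = ups (psubst s \<circ> r)"
  by (rule ext, case_tac x) (auto simp: psubst_ren ren_psubst comp_def)

lemma psubst_psubst: "psubst s (psubst r t) = psubst (psubst s \<circ> r) t"
  by (induction t arbitrary: s r) (auto simp: ups_comp)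

lemma ups_Var: "ups Var = Var"
  by (rule ext, case_tac x) auto

lemma psubst_Var: "psubst Var t = t"
  by (induction t) (auto simp: ups_Var)

lemma ups_Var_comp: "ups (Var \<circ> f) = Var \<circ> upr f"
  by (rule ext, case_tac x) auto

lemma ren_as_psubst: "ren f t = psubst (Var \<circ> f) t"
  by (induction t arbitrary: f) (auto simp: ups_Var_comp)

lemma upsn_lt: "i < n \<Longrightarrow> upsn n s i = Var i"
  by (induction n arbitrary: i) (auto, case_tac i, auto)

lemma upsn_add: "upsn n s (i + n) = ren (\<lambda>j. j + n) (s i)"
  by (induction n arbitrary: i) (auto simp: ren_ren comp_def ren_ident)

lemma upsn_ge: "n \<le> i \<Longrightarrow> upsn n s i = ren (\<lambda>j. j + n) (s (i - n))"
  using upsn_add[of n s "i - n"] by simp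

definition liftf :: "nat \<Rightarrow> nat \<Rightarrow> nat \<Rightarrow> nat" where
  "liftf k c i = (if i < c then i else i + k)"

lemma upr_liftf: "upr (liftf k c) = liftf k (Suc c)"
  by (rule ext, case_tac x) (auto simp: liftf_def)

lemma lift_ren: "lift k c t = ren (liftf k c) t"
  by (induction t arbitrary: c) (auto simp: upr_liftf liftf_def)

lemma lift0: "lift k 0 t = ren (\<lambda>i. i + k) t"
proof -
  have "liftf k 0 = (\<lambda>i. i + k)" by (rule ext) (simp add: liftf_def)
  thus ?thesis by (simp add: lift_ren)
qed

lemma lift_lift0: "lift a 0 (lift b 0 u) = lift (a + b) 0 u"
proof -
  have "(\<lambda>x. x + b + a) = (\<lambda>i. i + (a + b))" by (rule ext) simp
  thus ?thesis by (simp add: lift0 ren_ren comp_def)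
qed

lemma lift1_lift0: "c \<le> a \<Longrightarrow> lift 1 c (lift a 0 x) = lift (Suc a) 0 x"
proof -
  assume "c \<le> a"
  hence "liftf 1 c \<circ> (\<lambda>i. i + a) = (\<lambda>i. i + Suc a)" by (auto simp: liftf_def)
  thus ?thesis by (simp only: lift_ren[of 1 c] lift0 ren_ren)
qed

lemma psubst_lift: "psubst (upsn n s) (lift n 0 u) = lift n 0 (psubst s u)"
  by (simp add: lift0 psubst_ren ren_psubst comp_def upsn_add)

definition substf :: "nat \<Rightarrow> trm \<Rightarrow> nat \<Rightarrow> trm" where
  "substf k s i = (if k < i then Var (i - 1) else if i = k then s else Var i)"

lemma ups_substf: "ups (substf k s) = substf (Suc k) (lift 1 0 s)"
  by (rule ext, case_tac x) (auto simp: substf_def lift0)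

lemma subst_psubst: "subst t k s = psubst (substf k s) t"
  by (induction t arbitrary: k s) (auto simp: ups_substf substf_def)

lemma substf0_Suc: "substf 0 v \<circ> Suc = Var"
  by (rule ext) (simp add: substf_def)

lemma psubst_subst0: "psubst s (subst t 0 u) = subst (psubst (ups s) t) 0 (psubst s u)"
proof -
  have "psubst s \<circ> substf 0 u = psubst (substf 0 (psubst s u)) \<circ> ups s"
  proof
    fix x show "(psubst s \<circ> substf 0 u) x = (psubst (substf 0 (psubst s u)) \<circ> ups s) x"
      by (cases x) (simp_all add: substf_def psubst_ren substf0_Suc psubst_Var)
  qed
  thus ?thesis by (simp add: subst_psubst psubst_psubst)
qed

definition env :: "trm list \<Rightarrow> nat \<Rightarrow> trm" where
  "env us j = (if j < length us then us ! j else Var (j - length us))"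

lemma env_comp_add: "env us \<circ> (\<lambda>i. i + length us) = Var"
  by (rule ext) (simp add: env_def)

lemma psubst_env_lift: "psubst (env us) (lift (length us) 0 v) = v"
  by (simp add: lift0 psubst_ren env_comp_add psubst_Var)

lemma msubsts_psubst: "msubsts t us = psubst (env us) t"
proof (induction us arbitrary: t)
  case Nil
  have "env [] = Var" by (rule ext) (simp add: env_def)
  thus ?case by (simp add: psubst_Var)
next
  case (Cons u us)
  have "psubst (env us) \<circ> substf 0 (lift (length us) 0 u) = env (u # us)"
  proof
    fix j show "(psubst (env us) \<circ> substf 0 (lift (length us) 0 u)) j = env (u # us) j"
      by (cases j) (simp_all add: substf_def psubst_env_lift env_def)
  qed
  thus ?case using Cons by (simp add: subst_psubst psubst_psubst)
qed

lemma upr_pre: "(\<forall>i. (f i = k) = (i = k0)) \<Longrightarrow> (\<forall>i. (upr f i = Suc k) = (i = Suc k0))"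
  by (intro allI, case_tac i) auto

lemma occ_ren_inj: "(\<forall>i. (f i = k) = (i = k0)) \<Longrightarrow> occ k (ren f t) = occ k0 t"
proof (induction t arbitrary: f k k0)
  case (Lam t) thus ?case using upr_pre[OF Lam.prems] by simp
next
  case (App t u) show ?case by (simp add: App.IH(1)[OF App.prems] App.IH(2)[OF App.prems])
next
  case (Sub t u)
  thus ?case using Sub.IH(1)[OF upr_pre[OF Sub.prems]] Sub.IH(2)[OF Sub.prems] by simp
qed auto

lemma upr_none: "(\<forall>i. f i \<noteq> k) \<Longrightarrow> (\<forall>i. upr f i \<noteq> Suc k)"
  by (intro allI, case_tac i) auto

lemma occ_ren_none: "(\<forall>i. f i \<noteq> k) \<Longrightarrow> occ k (ren f t) = 0"
proof (induction t arbitrary: f k)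
  case (Lam t) thus ?case using upr_none[OF Lam.prems] by simp
next
  case (Sub t u)
  thus ?case using Sub.IH(1)[OF upr_none[OF Sub.prems]] Sub.IH(2)[OF Sub.prems] by simp
qed auto

lemma occ_Suc_ren: "occ (Suc j) (ren Suc t) = occ j t"
  by (rule occ_ren_inj) auto

lemma occ_0_ren: "occ 0 (ren Suc t) = 0"
  by (rule occ_ren_none) auto

lemma occ_lift0: "occ (i + n) (lift n 0 u) = occ i u"
  by (simp add: lift0, rule occ_ren_inj) auto

lemma occ_lift0_lt: "i < n \<Longrightarrow> occ i (lift n 0 u) = 0"
  by (simp add: lift0, rule occ_ren_none) auto

lemma ups_occ: "(\<forall>i. occ j (s i) = (if i = j0 then 1 else 0)) \<Longrightarrow>
   (\<forall>i. occ (Suc j) (ups s i) = (if i = Suc j0 then 1 else 0))"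
  by (intro allI, case_tac i) (auto simp: occ_Suc_ren)

lemma occ_psubst:
  "(\<forall>i. occ j (s i) = (if i = j0 then 1 else 0)) \<Longrightarrow> occ j (psubst s t) = occ j0 t"
proof (induction t arbitrary: s j j0)
  case (Lam t) thus ?case using ups_occ[OF Lam.prems] by simp
next
  case (App t u) show ?case by (simp add: App.IH(1)[OF App.prems] App.IH(2)[OF App.prems])
next
  case (Sub t u)
  thus ?case using Sub.IH(1)[OF ups_occ[OF Sub.prems]] Sub.IH(2)[OF Sub.prems] by simp
qed auto

lemma occ0_ups: "occ 0 (psubst (ups s) t) = occ 0 t"
proof (rule occ_psubst, rule allI)
  fix i show "occ 0 (ups s i) = (if i = 0 then 1 else 0)" by (cases i) (simp_all add: occ_0_ren)
qed

lemma occ1_ups2: "occ 1 (psubst (ups (ups s)) t) = occ 1 t"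
proof (rule occ_psubst, rule allI)
  fix i show "occ 1 (ups (ups s) i) = (if i = 1 then 1 else 0)"
  proof (cases i)
    case (Suc j)
    thus ?thesis by (cases j) (simp_all add: occ_0_ren occ_Suc_ren[of 0, simplified])
  qed simp
qed

lemma occ_ups_pos: "0 < occ (Suc i) (ups s j) \<Longrightarrow> \<exists>j'. j = Suc j' \<and> 0 < occ i (s j')"
  by (cases j) (auto simp: occ_Suc_ren)

lemma occ_psubst_pos: "0 < occ i (psubst s t) \<Longrightarrow> \<exists>j. 0 < occ j t \<and> 0 < occ i (s j)"
proof (induction t arbitrary: s i)
  case (Var x) thus ?case by auto
next
  case (Lam t)
  have "0 < occ (Suc i) (psubst (ups s) t)" using Lam.prems by simp
  then obtain j where j: "0 < occ j t" "0 < occ (Suc i) (ups s j)" using Lam.IH by blast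
  then obtain j' where "j = Suc j'" "0 < occ i (s j')" using occ_ups_pos by blast
  thus ?case using j by (rule_tac x=j' in exI) simp
next
  case (App t u)
  show ?case
  proof (cases "0 < occ i (psubst s t)")
    case True
    then obtain j where "0 < occ j t" "0 < occ i (s j)" using App.IH(1) by blast
    thus ?thesis by (rule_tac x=j in exI) simp
  next
    case False
    hence "0 < occ i (psubst s u)" using App.prems by simp
    then obtain j where "0 < occ j u" "0 < occ i (s j)" using App.IH(2) by blast
    thus ?thesis by (rule_tac x=j in exI) simp
  qed
next
  case (Sub t u)
  show ?case
  proof (cases "0 < occ (Suc i) (psubst (ups s) t)")
    case True
    then obtain j where j: "0 < occ j t" "0 < occ (Suc i) (ups s j)" using Sub.IH(1) by blast
    then obtain j' where "j = Suc j'" "0 < occ i (s j')" using occ_ups_pos by blast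
    thus ?thesis using j by (rule_tac x=j' in exI) simp
  next
    case False
    hence "0 < occ i (psubst s u)" using Sub.prems by simp
    then obtain j where "0 < occ j u" "0 < occ i (s j)" using Sub.IH(2) by blast
    thus ?thesis by (rule_tac x=j in exI) simp
  qed
qed

lemma ren_cong_occ: "(\<forall>i. 0 < occ i t \<longrightarrow> f i = g i) \<Longrightarrow> ren f t = ren g t"
proof (induction t arbitrary: f g)
  case (Lam t)
  have "\<forall>i. 0 < occ i t \<longrightarrow> upr f i = upr g i"
  proof (intro allI impI)
    fix i assume "0 < occ i t" thus "upr f i = upr g i" using Lam.prems by (cases i) auto
  qed
  thus ?case using Lam.IH[of "upr f" "upr g"] by simp
next
  case (Sub t u)
  have "\<forall>i. 0 < occ i t \<longrightarrow> upr f i = upr g i"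
  proof (intro allI impI)
    fix i assume "0 < occ i t" thus "upr f i = upr g i" using Sub.prems by (cases i) auto
  qed
  moreover have "\<forall>i. 0 < occ i u \<longrightarrow> f i = g i" using Sub.prems by simp
  ultimately show ?case using Sub.IH(1)[of "upr f" "upr g"] Sub.IH(2)[of f g] by simp
next
  case (App t u)
  have "\<forall>i. 0 < occ i t \<longrightarrow> f i = g i" "\<forall>i. 0 < occ i u \<longrightarrow> f i = g i" using App.prems by simp_all
  thus ?case using App.IH(1)[of f g] App.IH(2)[of f g] by simp
qed simp

text \<open>foldl Sub a L puts the jumps L on a; psL and occL describe how substitution
  and occurrence counting distribute over such a list (the i-th jump from the
  right lies under i binders).\<close>

fun psL :: "(nat \<Rightarrow> trm) \<Rightarrow> trm list \<Rightarrow> trm list" where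
  "psL s [] = []"
| "psL s (l # L) = psubst (upsn (length L) s) l # psL s L"

lemma length_psL [simp]: "length (psL s L) = length L"
  by (induction L) auto

lemma psubst_foldl: "psubst s (foldl Sub a L) = foldl Sub (psubst (upsn (length L) s) a) (psL s L)"
  by (induction L arbitrary: a) auto

fun occL :: "nat \<Rightarrow> trm list \<Rightarrow> nat" where
  "occL i [] = 0"
| "occL i (l # L) = occ (i + length L) l + occL i L"

lemma occ_foldl: "occ i (foldl Sub a L) = occ (i + length L) a + occL i L"
  by (induction L arbitrary: a) auto

fun jump_args :: "trm list \<Rightarrow> trm list" where
  "jump_args [] = []"
| "jump_args (u # us) = lift (length us) 0 u # jump_args us"

lemma length_jump_args [simp]: "length (jump_args us) = length us"
  by (induction us) auto

lemma jumps_foldl: "jumps t us = foldl Sub t (jump_args us)"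
  by (induction us arbitrary: t) auto

lemma jump_args_append:
  "jump_args (xs @ ys) = map (lift (length ys) 0) (jump_args xs) @ jump_args ys"
  by (induction xs) (auto simp: lift_lift0 add.commute)

lemma jump_args_split:
  assumes "jump_args us = ws1 @ w # ws2"
  obtains us1 u us2 where "us = us1 @ u # us2" "length us1 = length ws1"
    "ws1 = map (lift (Suc (length us2)) 0) (jump_args us1)"
    "w = lift (length us2) 0 u" "ws2 = jump_args us2"
proof -
  define xs where "xs = take (length ws1) us"
  define ys where "ys = drop (length ws1) us"
  have us: "us = xs @ ys" by (simp add: xs_def ys_def)
  have "length us = length ws1 + Suc (length ws2)" using arg_cong[OF assms, of length] by simp
  hence lx: "length xs = length ws1" by (simp add: xs_def)
  have "map (lift (length ys) 0) (jump_args xs) @ jump_args ys = ws1 @ w # ws2"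
    using assms us jump_args_append by simp
  hence e1: "map (lift (length ys) 0) (jump_args xs) = ws1" and e2: "jump_args ys = w # ws2"
    using lx by (simp_all add: append_eq_append_conv)
  then obtain u us2 where ys: "ys = u # us2" by (cases ys) auto
  show ?thesis by (rule that[of xs u us2]) (use e1 e2 us lx ys in simp_all)
qed

lemma occL_jump_args: "i < c \<Longrightarrow> occL i (map (lift c 0) (jump_args xs)) = 0"
proof (induction xs)
  case (Cons x xs)
  have "occ (i + length xs) (lift c 0 (lift (length xs) 0 x)) = 0"
    using Cons.prems by (simp add: lift_lift0 occ_lift0_lt)
  thus ?case using Cons by simp
qed simp

lemma psL_jump_args:
  "psL (substf 0 s) (map (lift (Suc n) 0) (jump_args xs)) = map (lift n 0) (jump_args xs)"
proof (induction xs)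
  case (Cons x xs)
  have e: "substf 0 s \<circ> (\<lambda>i. i + Suc n) = Var \<circ> (\<lambda>i. i + n)"
    by (rule ext) (simp add: substf_def)
  have "psubst (upsn (length xs) (substf 0 s)) (lift (Suc n) 0 (lift (length xs) 0 x))
      = psubst (upsn (length xs) (substf 0 s)) (lift (length xs) 0 (lift (Suc n) 0 x))"
    by (simp add: lift_lift0 add.commute)
  also have "\<dots> = lift (length xs) 0 (psubst (substf 0 s) (lift (Suc n) 0 x))"
    by (rule psubst_lift)
  also have "psubst (substf 0 s) (lift (Suc n) 0 x) = lift n 0 x"
    by (simp only: lift0 psubst_ren e ren_as_psubst[symmetric])
  finally show ?case using Cons by (simp add: lift_lift0 add.commute)
qed simp

section \<open>The splitting relation of rule c\<close>

lemma upr_if: "upr (\<lambda>i. if f i < d then f i else Suc (f i))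
  = (\<lambda>i. if upr f i < Suc d then upr f i else Suc (upr f i))"
proof
  fix x show "upr (\<lambda>i. if f i < d then f i else Suc (f i)) x
    = (if upr f x < Suc d then upr f x else Suc (upr f x))"
    by (cases x) auto
qed

lemma split_ren: "(\<forall>i. f i \<noteq> d) \<Longrightarrow>
    split d (ren f s) (ren (\<lambda>i. if f i < d then f i else Suc (f i)) s)"
proof (induction s arbitrary: f d)
  case (Var x)
  show ?case
  proof (cases "f x < d")
    case True thus ?thesis by (simp add: split_lt)
  next
    case False
    with Var.prems have "d < f x" by (metis linorder_neqE_nat)
    thus ?thesis by (simp add: split_gt)
  qed
next
  case (Lam t)
  have "\<forall>i. upr f i \<noteq> Suc d" using Lam.prems by (intro allI, case_tac i) auto
  from Lam.IH[OF this] show ?case by (simp add: upr_if split_Lam)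
next
  case (App t u) thus ?case by (simp add: split_App)
next
  case (Sub t u)
  have "\<forall>i. upr f i \<noteq> Suc d" using Sub.prems by (intro allI, case_tac i) auto
  from Sub.IH(1)[OF this] Sub.IH(2)[OF Sub.prems] show ?case by (simp add: upr_if split_Sub)
qed

lemma split_psubst: "split d t t' \<Longrightarrow>
    split d (psubst (upsn (Suc d) s) t) (psubst (upsn (Suc (Suc d)) s) t')"
proof (induction rule: split.induct)
  case (split_lt i d)
  have "upsn (Suc d) s i = Var i" "upsn (Suc (Suc d)) s i = Var i" using split_lt
    by (simp_all add: upsn_lt del: upsn.simps)
  thus ?case using split_lt by (simp only: psubst.simps split.split_lt)
next
  case (split_keep d)
  have "upsn (Suc d) s d = Var d" "upsn (Suc (Suc d)) s d = Var d"
    by (simp_all add: upsn_lt del: upsn.simps)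
  thus ?case by (simp only: psubst.simps split.split_keep)
next
  case (split_ren d)
  have "upsn (Suc d) s d = Var d" "upsn (Suc (Suc d)) s (Suc d) = Var (Suc d)"
    by (simp_all add: upsn_lt del: upsn.simps)
  thus ?case by (simp only: psubst.simps split.split_ren)
next
  case (split_gt d i)
  have a: "upsn (Suc d) s i = ren (\<lambda>j. j + Suc d) (s (i - Suc d))" using split_gt
    by (simp add: upsn_ge del: upsn.simps)
  have b: "upsn (Suc (Suc d)) s (Suc i) = ren (\<lambda>j. j + Suc (Suc d)) (s (i - Suc d))"
    using split_gt by (simp add: upsn_ge del: upsn.simps)
  have e: "(\<lambda>j. if j + Suc d < d then j + Suc d else Suc (j + Suc d))
      = (\<lambda>j. j + Suc (Suc d))" by (rule ext) simp
  have "split d (ren (\<lambda>j. j + Suc d) (s (i - Suc d)))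
      (ren (\<lambda>j. if j + Suc d < d then j + Suc d else Suc (j + Suc d)) (s (i - Suc d)))"
    by (rule split_ren) simp
  thus ?case by (simp only: a b e psubst.simps)
next
  case (split_Lam d t t') thus ?case by (simp only: psubst.simps upsn.simps split.split_Lam)
next
  case (split_App d t t' u u') thus ?case by (simp only: psubst.simps split.split_App)
next
  case (split_Sub d t t' u u') thus ?case by (simp only: psubst.simps upsn.simps split.split_Sub)
qed

lemma split_occ_gt: "split d t t' \<Longrightarrow> d < j \<Longrightarrow> occ (Suc j) t' = occ j t"
  by (induction arbitrary: j rule: split.induct) auto

lemma split_occ_lt: "split d t t' \<Longrightarrow> j < d \<Longrightarrow> occ j t' = occ j t"
  by (induction arbitrary: j rule: split.induct) auto

lemma split_occ_eq: "split d t t' \<Longrightarrow> occ d t' + occ (Suc d) t' = occ d t"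
  by (induction rule: split.induct) auto

lemma split_no_occ: "split d s s' \<Longrightarrow> occ d s = 0 \<Longrightarrow> s' = lift 1 d s"
  by (induction rule: split.induct) auto

lemma ups_agree:
  assumes "\<forall>i<d. s' i = s i" "s' d = s d" "s' (Suc d) = s d" "\<forall>i>d. s' (Suc i) = s i"
  shows "(\<forall>i<Suc d. ups s' i = ups s i) \<and> ups s' (Suc d) = ups s (Suc d) \<and>
    ups s' (Suc (Suc d)) = ups s (Suc d) \<and> (\<forall>i>Suc d. ups s' (Suc i) = ups s i)"
proof -
  have "ups s' i = ups s i" if "i < Suc d" for i using assms(1) that by (cases i) auto
  moreover have "ups s' (Suc i) = ups s i" if "Suc d < i" for i using assms(4) that
    by (cases i) auto
  ultimately show ?thesis using assms(2,3) by simp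
qed

lemma split_psubst_eq: "split d t t' \<Longrightarrow> (\<forall>i<d. s' i = s i) \<Longrightarrow> s' d = s d \<Longrightarrow> s' (Suc d) = s d \<Longrightarrow>
   (\<forall>i>d. s' (Suc i) = s i) \<Longrightarrow> psubst s' t' = psubst s t"
proof (induction arbitrary: s s' rule: split.induct)
  case (split_Lam d t t')
  thus ?case using ups_agree[OF split_Lam.prems] by simp
next
  case (split_Sub d t t' u u')
  thus ?case using ups_agree[OF split_Sub.prems] by simp
qed auto

fun liftL :: "nat \<Rightarrow> trm list \<Rightarrow> trm list" where
  "liftL d [] = []"
| "liftL d (l # L) = lift 1 (d + length L) l # liftL d L"

lemma split_foldl: "split d (foldl Sub a L) B' \<Longrightarrow> occL d L = 0 \<Longrightarrow>
   \<exists>a'. split (d + length L) a a' \<and> B' = foldl Sub a' (liftL d L)"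
proof (induction L arbitrary: a)
  case Nil thus ?case by simp
next
  case (Cons l L)
  from Cons.prems have "split d (foldl Sub (Sub a l) L) B'" "occL d L = 0" by simp_all
  from Cons.IH[OF this] obtain a'' where a'': "split (d + length L) (Sub a l) a''"
      "B' = foldl Sub a'' (liftL d L)" by blast
  from a''(1) obtain a' l' where "a'' = Sub a' l'"
      "split (Suc (d + length L)) a a'" "split (d + length L) l l'"
    by (cases rule: split.cases) auto
  moreover have "occ (d + length L) l = 0" using Cons.prems by simp
  ultimately have "l' = lift 1 (d + length L) l" using split_no_occ by blast
  thus ?case using a'' \<open>a'' = Sub a' l'\<close> \<open>split (Suc (d + length L)) a a'\<close>
    by auto
qed

lemma liftL_jump_args:
  "liftL 0 (map (lift (Suc n) 0) (jump_args xs)) = map (lift (Suc (Suc n)) 0) (jump_args xs)"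
proof (induction xs)
  case (Cons x xs)
  have "lift 1 (length xs) (lift (Suc n) 0 (lift (length xs) 0 x))
      = lift (Suc (Suc n)) 0 (lift (length xs) 0 x)"
    by (simp only: lift_lift0 lift1_lift0[of "length xs" "Suc n + length xs"] le_add2) simp
  thus ?case using Cons by simp
qed simp

section \<open>Reduction under renaming and substitution\<close>

lemma step_psubst: "step t t' \<Longrightarrow> step (psubst s t) (psubst s t')"
proof (induction arbitrary: s rule: step.induct)
  case (dB t L u)
  have "step (App (foldl Sub (Lam (psubst (ups (upsn (length L) s)) t)) (psL s L)) (psubst s u))
     (foldl Sub (Sub (psubst (ups (upsn (length L) s)) t) (lift (length (psL s L)) 0 (psubst s u)))
       (psL s L))"
    by (rule step.dB)
  thus ?case by (simp add: psubst_foldl psubst_lift del: upsn.simps)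
next
  case (w t u)
  thus ?case by (simp add: psubst_subst0 occ0_ups step.w)
next
  case (d t u)
  thus ?case by (simp add: psubst_subst0 occ0_ups step.d)
next
  case (c t t' u)
  have sp: "split 0 (psubst (ups s) t) (psubst (ups (ups s)) t')"
    using split_psubst[OF c(2), of s] by simp
  have "step (Sub (psubst (ups s) t) (psubst s u))
      (Sub (Sub (psubst (ups (ups s)) t') (lift 1 0 (psubst s u))) (psubst s u))"
    by (rule step.c) (use c sp in \<open>simp_all add: occ0_ups occ1_ups2[simplified]\<close>)
  moreover have "psubst (ups s) (lift 1 0 u) = lift 1 0 (psubst s u)"
    using psubst_lift[of 1 s u] by simp
  ultimately show ?case by simp
qed (auto intro: step.intros)

lemma step_ren: "step t t' \<Longrightarrow> step (ren f t) (ren f t')"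
  by (simp add: ren_as_psubst step_psubst)

lemma occ_step: "step t t' \<Longrightarrow> 0 < occ i t' \<Longrightarrow> 0 < occ i t"
proof (induction arbitrary: i rule: step.induct)
  case (dB t L u)
  thus ?case using occ_lift0[of i "length L" u] by (auto simp: occ_foldl)
next
  case (w t u)
  obtain j where "0 < occ j t" "0 < occ i (substf 0 u j)"
    using occ_psubst_pos w(2) by (metis subst_psubst)
  thus ?case by (cases j) (auto simp: substf_def split: if_splits)
next
  case (d t u)
  obtain j where "0 < occ j t" "0 < occ i (substf 0 u j)"
    using occ_psubst_pos d(2) by (metis subst_psubst)
  thus ?case by (cases j) (auto simp: substf_def split: if_splits)
next
  case (c t t' u)
  have "occ (Suc (Suc i)) t' = occ (Suc i) t" using split_occ_gt[OF c(2), of "Suc i"] by simp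
  moreover have "occ (Suc i) (lift 1 0 u) = occ i u" using occ_lift0[of i 1 u] by simp
  ultimately show ?case using c(5) by simp
next
  case (subR u u' t) thus ?case by (cases "0 < occ (Suc i) t") auto
next
  case (appR u u' t) thus ?case by (cases "0 < occ i t") auto
qed auto

lemma step_lift_inv:
  assumes st: "step (lift n 0 u) w"
  obtains u' where "w = lift n 0 u'" "step u u'"
proof -
  let ?g = "\<lambda>i. i - n"
  have "step (ren ?g (lift n 0 u)) (ren ?g w)" using step_ren[OF st] .
  moreover have "ren ?g (lift n 0 u) = u" by (simp add: lift0 ren_ren comp_def ren_ident)
  moreover have "ren (\<lambda>i. i + n) (ren ?g w) = w"
  proof -
    have "ren (\<lambda>i. i - n + n) w = ren (\<lambda>i. i) w"
    proof (rule ren_cong_occ, intro allI impI)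
      fix i assume "0 < occ i w"
      hence "0 < occ i (lift n 0 u)" using occ_step[OF st] by blast
      hence "n \<le> i" using occ_lift0_lt[of i n u] by (cases "i < n") auto
      thus "i - n + n = i" by simp
    qed
    thus ?thesis by (simp add: ren_ren comp_def ren_ident)
  qed
  ultimately show ?thesis using that by (metis lift0)
qed

lemma rtranclp_map: "(\<And>a b. r a b \<Longrightarrow> r (f a) (f b)) \<Longrightarrow> r\<^sup>*\<^sup>* a b \<Longrightarrow> r\<^sup>*\<^sup>* (f a) (f b)"
  by (rotate_tac, induction rule: rtranclp_induct) (auto intro: rtranclp.rtrancl_into_rtrancl)

lemma tranclp_map: "(\<And>a b. r a b \<Longrightarrow> r (f a) (f b)) \<Longrightarrow> r\<^sup>+\<^sup>+ a b \<Longrightarrow> r\<^sup>+\<^sup>+ (f a) (f b)"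
  by (rotate_tac, induction rule: tranclp_induct) (auto intro: tranclp.trancl_into_trancl)

lemma step_foldl_App_head: "step a a' \<Longrightarrow> step (foldl App a vs) (foldl App a' vs)"
  by (induction vs arbitrary: a a') (auto intro: step.appL)

lemma step_foldl_App_arg:
  "step v v' \<Longrightarrow> step (foldl App a (vs1 @ v # vs2)) (foldl App a (vs1 @ v' # vs2))"
  by (simp add: step_foldl_App_head step.appR)

lemma steps_App: "step\<^sup>*\<^sup>* a a' \<Longrightarrow> step\<^sup>*\<^sup>* b b' \<Longrightarrow> step\<^sup>*\<^sup>* (App a b) (App a' b')"
  using rtranclp_map[of step "\<lambda>x. App x b"] rtranclp_map[of step "App a'"]
  by (meson rtranclp_trans step.appL step.appR)

lemma steps_Sub: "step\<^sup>*\<^sup>* a a' \<Longrightarrow> step\<^sup>*\<^sup>* b b' \<Longrightarrow> step\<^sup>*\<^sup>* (Sub a b) (Sub a' b')"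
  using rtranclp_map[of step "\<lambda>x. Sub x b"] rtranclp_map[of step "Sub a'"]
  by (meson rtranclp_trans step.subL step.subR)

lemma steps_ups: "\<forall>j. step\<^sup>*\<^sup>* (s j) (s' j) \<Longrightarrow> \<forall>j. step\<^sup>*\<^sup>* (ups s j) (ups s' j)"
  by (intro allI, case_tac j) (auto intro: rtranclp_map step_ren)

lemma steps_psubst: "\<forall>j. step\<^sup>*\<^sup>* (s j) (s' j) \<Longrightarrow> step\<^sup>*\<^sup>* (psubst s t) (psubst s' t)"
proof (induction t arbitrary: s s')
  case (Lam t)
  thus ?case using Lam.IH[OF steps_ups[OF Lam.prems]] by (simp add: rtranclp_map step.lam)
next
  case (App t u)
  thus ?case using App.IH(1)[OF App.prems] App.IH(2)[OF App.prems] by (simp add: steps_App)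
next
  case (Sub t u)
  thus ?case using Sub.IH(1)[OF steps_ups[OF Sub.prems]] Sub.IH(2)[OF Sub.prems]
    by (simp add: steps_Sub)
qed simp

section \<open>Strong normalization as an inductive predicate\<close>

inductive SNa :: "trm \<Rightarrow> bool" where
  SNaI: "(\<And>t'. step t t' \<Longrightarrow> SNa t') \<Longrightarrow> SNa t"

lemma SNa_SN: "SNa t \<Longrightarrow> SN t"
proof (induction rule: SNa.induct)
  case (SNaI t)
  show ?case unfolding SN_def
  proof
    assume "\<exists>f. f 0 = t \<and> (\<forall>i. step (f i) (f (Suc i)))"
    then obtain f where f: "f 0 = t" "\<forall>i. step (f i) (f (Suc i))" by blast
    hence "step t (f 1)" by (metis One_nat_def)
    hence "SN (f 1)" using SNaI by blast
    moreover have "\<exists>g. g 0 = f 1 \<and> (\<forall>i. step (g i) (g (Suc i)))"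
      by (rule exI[of _ "\<lambda>i. f (Suc i)"]) (use f in simp)
    ultimately show False unfolding SN_def by blast
  qed
qed

lemma notSNa_step: "\<not> SNa x \<Longrightarrow> \<exists>y. step x y \<and> \<not> SNa y"
  using SNa.intros by blast

lemma SN_SNa: "SN t \<Longrightarrow> SNa t"
proof (rule ccontr)
  assume sn: "SN t" and ns: "\<not> SNa t"
  define f where "f = rec_nat t (\<lambda>_ x. SOME y. step x y \<and> \<not> SNa y)"
  have f0: "f 0 = t" by (simp add: f_def)
  have fS: "f (Suc i) = (SOME y. step (f i) y \<and> \<not> SNa y)" for i by (simp add: f_def)
  have nf: "\<not> SNa (f i)" for i
  proof (induction i)
    case 0 thus ?case using ns f0 by simp
  next
    case (Suc i) thus ?case unfolding fS using someI_ex[OF notSNa_step[OF Suc]] by blast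
  qed
  have "step (f i) (f (Suc i))" for i unfolding fS using someI_ex[OF notSNa_step[OF nf[of i]]]
    by blast
  with f0 sn show False unfolding SN_def by blast
qed

lemma SNa_step: "SNa t \<Longrightarrow> step t t' \<Longrightarrow> SNa t'"
  by (erule SNa.cases) blast

lemma SNa_steps: "step\<^sup>*\<^sup>* t t' \<Longrightarrow> SNa t \<Longrightarrow> SNa t'"
  by (induction rule: rtranclp_induct) (auto intro: SNa_step)

lemma foldl_Sub_Lam_not_App: "foldl Sub (Lam s) L \<noteq> App a b"
  by (induction L rule: rev_induct) auto

lemma foldl_App_snoc_App: "vs \<noteq> [] \<Longrightarrow> \<exists>a b. foldl App a0 vs = App a b"
  by (induction vs rule: rev_induct) auto

lemma step_foldl_App: "step (foldl App a vs) X \<Longrightarrow>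
   (\<exists>a'. step a a' \<and> X = foldl App a' vs) \<or>
   (\<exists>vs1 v vs2 v'. vs = vs1 @ v # vs2 \<and> step v v' \<and> X = foldl App a (vs1 @ v' # vs2)) \<or>
   (\<exists>s L v vs'. vs = v # vs' \<and> a = foldl Sub (Lam s) L \<and>
       X = foldl App (foldl Sub (Sub s (lift (length L) 0 v)) L) vs')"
proof (induction vs arbitrary: X rule: rev_induct)
  case Nil thus ?case by simp
next
  case (snoc v vs)
  from snoc.prems have "step (App (foldl App a vs) v) X" by simp
  thus ?case
  proof (cases rule: step.cases)
    case (dB s L)
    show ?thesis
    proof (cases "vs = []")
      case True thus ?thesis using dB by auto
    next
      case False
      then obtain a1 b1 where "foldl App a vs = App a1 b1" using foldl_App_snoc_App by blast
      thus ?thesis using dB foldl_Sub_Lam_not_App by metis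
    qed
  next
    case (appL t')
    from appL have "step (foldl App a vs) t'" by simp
    from snoc.IH[OF this] show ?thesis
    proof (elim disjE exE conjE)
      fix a' assume "step a a'" "t' = foldl App a' vs"
      thus ?thesis using appL by auto
    next
      fix vs1 v0 vs2 v' assume "vs = vs1 @ v0 # vs2" "step v0 v'"
          "t' = foldl App a (vs1 @ v' # vs2)"
      hence "vs @ [v] = vs1 @ v0 # (vs2 @ [v]) \<and> step v0 v' \<and>
          X = foldl App a (vs1 @ v' # (vs2 @ [v]))"
          using appL by simp
      thus ?thesis by blast
    next
      fix s L v1 vs' assume "vs = v1 # vs'" "a = foldl Sub (Lam s) L"
          "t' = foldl App (foldl Sub (Sub s (lift (length L) 0 v1)) L) vs'"
      hence "vs @ [v] = v1 # (vs' @ [v]) \<and> a = foldl Sub (Lam s) L \<and>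
          X = foldl App (foldl Sub (Sub s (lift (length L) 0 v1)) L) (vs' @ [v])"
          using appL by simp
      thus ?thesis by blast
    qed
  next
    case (appR v')
    hence "vs @ [v] = vs @ v # [] \<and> step v v' \<and> X = foldl App a (vs @ v' # [])" by simp
    thus ?thesis by blast
  qed
qed

definition root_step :: "trm \<Rightarrow> trm \<Rightarrow> trm \<Rightarrow> bool" where
  "root_step B w Z \<longleftrightarrow> (occ 0 B \<le> 1 \<and> Z = subst B 0 w) \<or>
     (\<exists>B'. 2 \<le> occ 0 B \<and> split 0 B B' \<and> 1 \<le> occ 0 B' \<and> 1 \<le> occ 1 B' \<and>
       Z = Sub (Sub B' (lift 1 0 w)) w)"

lemma step_foldl_Sub: "step (foldl Sub t ws) Y \<Longrightarrow>
   (\<exists>t'. step t t' \<and> Y = foldl Sub t' ws) \<or>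
   (\<exists>ws1 w ws2 w'. ws = ws1 @ w # ws2 \<and> step w w' \<and> Y = foldl Sub t (ws1 @ w' # ws2)) \<or>
   (\<exists>ws1 w ws2 Z. ws = ws1 @ w # ws2 \<and> Y = foldl Sub Z ws2 \<and> root_step (foldl Sub t ws1) w Z)"
proof (induction ws arbitrary: Y rule: rev_induct)
  case Nil thus ?case by simp
next
  case (snoc w ws)
  have root: ?case if "root_step (foldl Sub t ws) w Y"
  proof -
    have "ws @ [w] = ws @ w # [] \<and> Y = foldl Sub Y [] \<and> root_step (foldl Sub t ws) w Y"
      using that by simp
    thus ?case by blast
  qed
  from snoc.prems have "step (Sub (foldl Sub t ws) w) Y" by simp
  thus ?case
  proof (cases rule: step.cases)
    case w thus ?thesis by (intro root) (auto simp: root_step_def)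
  next
    case d thus ?thesis by (intro root) (auto simp: root_step_def)
  next
    case c thus ?thesis by (intro root) (auto simp: root_step_def)
  next
    case (subL t')
    from subL have "step (foldl Sub t ws) t'" by simp
    from snoc.IH[OF this] show ?thesis
    proof (elim disjE exE conjE)
      fix a' assume "step t a'" "t' = foldl Sub a' ws"
      thus ?thesis using subL by auto
    next
      fix vs1 v0 vs2 v' assume "ws = vs1 @ v0 # vs2" "step v0 v'"
          "t' = foldl Sub t (vs1 @ v' # vs2)"
      hence "ws @ [w] = vs1 @ v0 # (vs2 @ [w]) \<and> step v0 v' \<and>
          Y = foldl Sub t (vs1 @ v' # (vs2 @ [w]))"
          using subL by simp
      thus ?thesis by blast
    next
      fix vs1 v0 vs2 Z assume "ws = vs1 @ v0 # vs2" "t' = foldl Sub Z vs2"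
          "root_step (foldl Sub t vs1) v0 Z"
      hence "ws @ [w] = vs1 @ v0 # (vs2 @ [w]) \<and>
          Y = foldl Sub Z (vs2 @ [w]) \<and> root_step (foldl Sub t vs1) v0 Z"
          using subL by simp
      thus ?thesis by blast
    qed
  next
    case (subR w')
    hence "ws @ [w] = ws @ w # [] \<and> step w w' \<and> Y = foldl Sub t (ws @ w' # [])" by simp
    thus ?thesis by blast
  qed
qed

lemma foldl_Sub_eq_Lam: "foldl Sub t ws = foldl Sub (Lam s) L \<Longrightarrow>
    \<exists>L0. L = L0 @ ws \<and> t = foldl Sub (Lam s) L0"
proof (induction ws arbitrary: L rule: rev_induct)
  case Nil thus ?case by simp
next
  case (snoc w ws)
  show ?case
  proof (cases L rule: rev_cases)
    case Nil thus ?thesis using snoc.prems by simp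
  next
    case (snoc L' l)
    with snoc.prems have "foldl Sub t ws = foldl Sub (Lam s) L'" "l = w" by simp_all
    from snoc.IH[OF this(1)] obtain L0 where "L' = L0 @ ws" "t = foldl Sub (Lam s) L0" by blast
    thus ?thesis using snoc \<open>l = w\<close> by auto
  qed
qed

section \<open>The jump measure\<close>

fun jump_mset :: "trm \<Rightarrow> nat \<Rightarrow> trm list \<Rightarrow> trm multiset" where
  "jump_mset t k [] = {#}"
| "jump_mset t k (u # us) = replicate_mset (max 1 (occ k t)) u + jump_mset t (Suc k) us"

fun jump_sq :: "trm \<Rightarrow> nat \<Rightarrow> trm list \<Rightarrow> nat" where
  "jump_sq t k [] = 0"
| "jump_sq t k (u # us) = occ k t ^ 2 + jump_sq t (Suc k) us"

lemma jump_mset_append: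
  "jump_mset t k (xs @ ys) = jump_mset t k xs + jump_mset t (k + length xs) ys"
  by (induction xs arbitrary: k) auto

lemma jump_sq_append: "jump_sq t k (xs @ ys) = jump_sq t k xs + jump_sq t (k + length xs) ys"
  by (induction xs arbitrary: k) auto

lemma jump_mset_cong:
  "(\<And>i. i < length us \<Longrightarrow> occ (k + i) t = occ (k' + i) t') \<Longrightarrow> jump_mset t k us = jump_mset t' k' us"
proof (induction us arbitrary: k k')
  case (Cons u us)
  have "occ k t = occ k' t'" using Cons.prems[of 0] by simp
  moreover have "jump_mset t (Suc k) us = jump_mset t' (Suc k') us"
    using Cons.prems[of "Suc _"] by (intro Cons.IH) simp
  ultimately show ?case by simp
qed simp

lemma jump_sq_cong:
  "(\<And>i. i < length us \<Longrightarrow> occ (k + i) t = occ (k' + i) t') \<Longrightarrow> jump_sq t k us = jump_sq t' k' us"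
proof (induction us arbitrary: k k')
  case (Cons u us)
  have "occ k t = occ k' t'" using Cons.prems[of 0] by simp
  moreover have "jump_sq t (Suc k) us = jump_sq t' (Suc k') us"
    using Cons.prems[of "Suc _"] by (intro Cons.IH) simp
  ultimately show ?case by simp
qed simp

definition step_SN :: "(trm \<times> trm) set" where
  "step_SN = {(u', u). SNa u \<and> step u u'}"

lemma wf_step_SN: "wf step_SN"
  unfolding wf_def
proof (intro allI impI)
  fix P :: "trm \<Rightarrow> bool" and x
  assume H: "\<forall>x. (\<forall>y. (y, x) \<in> step_SN \<longrightarrow> P y) \<longrightarrow> P x"
  show "P x"
  proof (cases "SNa x")
    case True thus ?thesis
    proof (induction rule: SNa.induct)
      case (SNaI x)
      have "\<forall>y. (y, x) \<in> step_SN \<longrightarrow> P y" using SNaI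
        by (auto simp: step_SN_def)
      thus ?case using H by blast
    qed
  next
    case False thus ?thesis using H by (simp add: step_SN_def)
  qed
qed

definition jump_measure :: "trm \<Rightarrow> trm list \<Rightarrow> trm multiset \<times> nat" where
  "jump_measure t us = (jump_mset t 0 us, jump_sq t 0 us)"

definition measure_order :: "((trm multiset \<times> nat) \<times> (trm multiset \<times> nat)) set" where
  "measure_order = mult step_SN <*lex*> less_than"

lemma wf_measure_order: "wf measure_order"
  unfolding measure_order_def by (intro wf_lex_prod wf_mult wf_step_SN wf_less_than)

lemma jump_measure_arg:
  assumes "SNa u" "step u u'"
  shows "(jump_measure t (us1 @ u' # us2), jump_measure t (us1 @ u # us2)) \<in> measure_order"
proof -
  let ?A = "jump_mset t 0 us1 + jump_mset t (Suc (length us1)) us2"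
    and ?k = "max 1 (occ (length us1) t)"
  have "(?A + replicate_mset ?k u', ?A + replicate_mset ?k u) \<in> mult step_SN"
    by (rule one_step_implies_mult) (use assms in \<open>auto simp: step_SN_def\<close>)
  thus ?thesis
    by (simp add: measure_order_def jump_measure_def jump_mset_append ac_simps)
qed

lemma occ_psubst_upsn_lt: "i < k \<Longrightarrow> occ i (psubst (upsn k s) t) = occ i t"
proof (rule occ_psubst, rule allI)
  fix x assume "i < k"
  show "occ i (upsn k s x) = (if x = i then 1 else 0)"
  proof (cases "x < k")
    case True thus ?thesis by (simp add: upsn_lt del: upsn.simps)
  next
    case False
    hence "upsn k s x = ren (\<lambda>j. j + k) (s (x - k))" by (simp add: upsn_ge del: upsn.simps)
    moreover have "occ i (ren (\<lambda>j. j + k) (s (x - k))) = 0"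
      by (rule occ_ren_none) (use \<open>i < k\<close> in auto)
    ultimately show ?thesis using False \<open>i < k\<close> by simp
  qed
qed

lemma occ_psubst_erase_ge: "i < n \<Longrightarrow>
    occ (k + i) (psubst (upsn k (substf 0 (lift n 0 u))) t) = occ (Suc (k + i)) t"
proof (rule occ_psubst, rule allI)
  fix x assume "i < n"
  show "occ (k + i) (upsn k (substf 0 (lift n 0 u)) x) = (if x = Suc (k + i) then 1 else 0)"
  proof (cases "x < k")
    case True thus ?thesis by (simp add: upsn_lt del: upsn.simps)
  next
    case False
    hence up: "upsn k (substf 0 (lift n 0 u)) x
        = ren (\<lambda>j. j + k) (substf 0 (lift n 0 u) (x - k))"
        by (simp add: upsn_ge del: upsn.simps)
    show ?thesis
    proof (cases "x = k")
      case True
      have "ren (\<lambda>j. j + k) (lift n 0 u) = ren (\<lambda>j. j + n + k) u"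
        by (simp add: lift0 ren_ren comp_def)
      moreover have "occ (k + i) (ren (\<lambda>j. j + n + k) u) = 0"
        by (rule occ_ren_none) (use \<open>i < n\<close> in auto)
      ultimately show ?thesis using up True by (simp add: substf_def)
    next
      case False
      with \<open>\<not> x < k\<close> have "k < x" by simp
      thus ?thesis using up by (auto simp: substf_def)
    qed
  qed
qed

lemma jump_measure_erase:
  fixes t u :: trm and us1 us2 :: "trm list"
  defines "t2 \<equiv> psubst (upsn (length us1) (substf 0 (lift (length us2) 0 u))) t"
  shows "(jump_measure t2 (us1 @ us2), jump_measure t (us1 @ u # us2)) \<in> measure_order"
proof -
  let ?k = "length us1"
  have "jump_mset t2 0 us1 = jump_mset t 0 us1"
    by (rule jump_mset_cong) (simp add: t2_def occ_psubst_upsn_lt del: upsn.simps)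
  moreover have "jump_mset t2 ?k us2 = jump_mset t (Suc ?k) us2"
    by (rule jump_mset_cong) (simp add: t2_def occ_psubst_erase_ge del: upsn.simps)
  moreover have "(jump_mset t 0 us1 + jump_mset t (Suc ?k) us2 + {#},
      jump_mset t 0 us1 + jump_mset t (Suc ?k) us2 + replicate_mset (max 1 (occ ?k t)) u)
          \<in> mult step_SN"
    by (rule one_step_implies_mult) auto
  ultimately show ?thesis
    by (simp add: measure_order_def jump_measure_def jump_mset_append ac_simps)
qed

text \<open>Splitting the variable of a jump (rule c) keeps the multiset, because both halves
  occur, and decreases the sum of squares, because a^2 + b^2 < (a + b)^2 for a, b > 0.\<close>
lemma jump_measure_dup:
  assumes spt: "split (length us1) t t'"
    and a: "1 \<le> occ (length us1) t'" and b: "1 \<le> occ (Suc (length us1)) t'"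
  shows "(jump_measure t' (us1 @ u # u # us2), jump_measure t (us1 @ u # us2)) \<in> measure_order"
proof -
  let ?k = "length us1"
  define a where "a = occ ?k t'"
  define b where "b = occ (Suc ?k) t'"
  have ab: "occ ?k t = a + b" using split_occ_eq[OF spt] by (simp add: a_def b_def)
  have "jump_mset t' 0 us1 = jump_mset t 0 us1" "jump_sq t' 0 us1 = jump_sq t 0 us1"
    by (rule jump_mset_cong jump_sq_cong, simp add: split_occ_lt[OF spt])+
  moreover have "jump_mset t' (Suc (Suc ?k)) us2 = jump_mset t (Suc ?k) us2"
      "jump_sq t' (Suc (Suc ?k)) us2 = jump_sq t (Suc ?k) us2"
    by (rule jump_mset_cong jump_sq_cong, simp add: split_occ_gt[OF spt])+
  moreover have "replicate_mset (a + b) u = replicate_mset a u + replicate_mset b u"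
    by (induction a) auto
  moreover have "a\<^sup>2 + b\<^sup>2 < (a + b)\<^sup>2"
    using a b by (simp add: a_def b_def power2_sum)
  ultimately show ?thesis using a b
    by (simp add: measure_order_def jump_measure_def jump_mset_append jump_sq_append ab
        a_def[symmetric] b_def[symmetric] ac_simps)
qed

section \<open>Reducts of jumps t us\<close>

lemma msubsts_arg_steps:
  assumes "step u u'"
  shows "step\<^sup>*\<^sup>* (msubsts t (us1 @ u # us2)) (msubsts t (us1 @ u' # us2))"
proof -
  have "step\<^sup>*\<^sup>* (env (us1 @ u # us2) j) (env (us1 @ u' # us2) j)" for j
  proof (cases "j = length us1")
    case False
    hence "env (us1 @ u # us2) j = env (us1 @ u' # us2) j"
      by (cases "j < length us1") (auto simp: env_def nth_append nth_Cons' not_less)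
    thus ?thesis by simp
  qed (use assms in \<open>simp add: env_def\<close>)
  thus ?thesis by (simp add: msubsts_psubst steps_psubst)
qed

lemma msubsts_erase:
  "msubsts (psubst (upsn (length us1) (substf 0 (lift (length us2) 0 u))) t) (us1 @ us2)
   = msubsts t (us1 @ u # us2)"
proof -
  let ?k = "length us1" and ?n = "length us2"
  have "psubst (env (us1 @ us2)) \<circ> upsn ?k (substf 0 (lift ?n 0 u)) = env (us1 @ u # us2)"
  proof
    fix j
    show "(psubst (env (us1 @ us2)) \<circ> upsn ?k (substf 0 (lift ?n 0 u))) j = env (us1 @ u # us2) j"
    proof (cases "j < ?k")
      case True thus ?thesis by (simp add: upsn_lt env_def nth_append del: upsn.simps)
    next
      case False
      hence up: "upsn ?k (substf 0 (lift ?n 0 u)) j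
          = ren (\<lambda>i. i + ?k) (substf 0 (lift ?n 0 u) (j - ?k))"
        by (simp add: upsn_ge del: upsn.simps)
      show ?thesis
      proof (cases "j = ?k")
        case True
        have "env (us1 @ us2) \<circ> ((\<lambda>i. i + ?k) \<circ> (\<lambda>i. i + ?n)) = Var"
          by (rule ext) (simp add: env_def)
        hence "psubst (env (us1 @ us2)) (ren (\<lambda>i. i + ?k) (lift ?n 0 u)) = u"
          by (simp only: lift0 ren_ren psubst_ren psubst_Var)
        thus ?thesis using True up by (simp add: substf_def env_def del: upsn.simps)
      next
        case False
        with \<open>\<not> j < ?k\<close> have "?k < j" by simp
        thus ?thesis using up
          by (cases j) (auto simp: substf_def env_def nth_append nth_Cons' not_less)
      qed
    qed
  qed
  thus ?thesis by (simp add: msubsts_psubst psubst_psubst del: upsn.simps)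
qed

lemma msubsts_dup:
  assumes "split (length us1) t t'"
  shows "msubsts t' (us1 @ u # u # us2) = msubsts t (us1 @ u # us2)"
proof -
  let ?k = "length us1" and ?s = "env (us1 @ u # us2)" and ?s' = "env (us1 @ u # u # us2)"
  have "(\<forall>i<?k. ?s' i = ?s i) \<and> ?s' ?k = ?s ?k \<and> ?s' (Suc ?k) = ?s ?k \<and> (\<forall>i>?k. ?s' (Suc i) = ?s i)"
    by (auto simp: env_def nth_append nth_Cons' not_less)
  thus ?thesis using split_psubst_eq[OF assms] by (simp add: msubsts_psubst)
qed

lemma arg_step_jumps:
  assumes ws: "jump_args us = ws1 @ w # ws2" and sw: "step w w'" and snu: "\<forall>u\<in>set us. SNa u"
  obtains us' where "foldl Sub t (ws1 @ w' # ws2) = jumps t us'" "\<forall>u\<in>set us'. SNa u"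
    "step\<^sup>*\<^sup>* (msubsts t us) (msubsts t us')"
        "(jump_measure t us', jump_measure t us) \<in> measure_order"
proof -
  obtain us1 u us2 where us: "us = us1 @ u # us2"
    and ws1: "ws1 = map (lift (Suc (length us2)) 0) (jump_args us1)"
    and w: "w = lift (length us2) 0 u" and ws2: "ws2 = jump_args us2"
    using jump_args_split[OF ws] by blast
  obtain u' where w': "w' = lift (length us2) 0 u'" and su: "step u u'"
    using step_lift_inv sw w by blast
  have "SNa u" using snu us by simp
  show ?thesis
  proof (rule that[of "us1 @ u' # us2"])
    show "foldl Sub t (ws1 @ w' # ws2) = jumps t (us1 @ u' # us2)"
      by (simp add: jumps_foldl jump_args_append ws1 ws2 w')
    show "\<forall>x\<in>set (us1 @ u' # us2). SNa x"
      using snu SNa_step[OF \<open>SNa u\<close> su] us by auto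
    show "step\<^sup>*\<^sup>* (msubsts t us) (msubsts t (us1 @ u' # us2))"
      using msubsts_arg_steps[OF su] us by simp
    show "(jump_measure t (us1 @ u' # us2), jump_measure t us) \<in> measure_order"
      using jump_measure_arg[OF \<open>SNa u\<close> su] us by simp
  qed
qed

lemma erase_step_jumps:
  fixes t u :: trm and us1 us2 :: "trm list"
  defines "t2 \<equiv> psubst (upsn (length us1) (substf 0 (lift (length us2) 0 u))) t"
  shows "foldl Sub (subst (foldl Sub t (map (lift (Suc (length us2)) 0) (jump_args us1))) 0
      (lift (length us2) 0 u)) (jump_args us2) = jumps t2 (us1 @ us2)"
  by (simp add: t2_def subst_psubst psubst_foldl psL_jump_args jumps_foldl jump_args_append
      del: upsn.simps)

lemma dup_step_jumps:
  assumes sp: "split 0 (foldl Sub t (map (lift (Suc (length us2)) 0) (jump_args us1))) B'"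
  obtains t' where "split (length us1) t t'"
    "foldl Sub (Sub (Sub B' (lift 1 0 (lift (length us2) 0 u))) (lift (length us2) 0 u))
       (jump_args us2) = jumps t' (us1 @ u # u # us2)"
    "occ 0 B' = occ (length us1) t'" "occ 1 B' = occ (Suc (length us1)) t'"
proof -
  let ?L = "map (lift (Suc (length us2)) 0) (jump_args us1)"
  have "occL 0 ?L = 0" by (rule occL_jump_args) simp
  from split_foldl[OF sp this] obtain t' where spt: "split (length us1) t t'"
    and B': "B' = foldl Sub t' (map (lift (Suc (Suc (length us2))) 0) (jump_args us1))"
    by (auto simp: liftL_jump_args)
  show ?thesis
  proof (rule that[OF spt])
    show "foldl Sub (Sub (Sub B' (lift 1 0 (lift (length us2) 0 u))) (lift (length us2) 0 u))
       (jump_args us2) = jumps t' (us1 @ u # u # us2)"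
      by (simp add: B' jumps_foldl jump_args_append lift_lift0)
    show "occ 0 B' = occ (length us1) t'" "occ 1 B' = occ (Suc (length us1)) t'"
      using occL_jump_args[of 0 "Suc (Suc (length us2))" us1]
        occL_jump_args[of 1 "Suc (Suc (length us2))" us1]
      by (simp_all add: B' occ_foldl)
  qed
qed

lemma root_step_jumps:
  assumes ws: "jump_args us = ws1 @ w # ws2" and rt: "root_step (foldl Sub t ws1) w Z"
  obtains t' us' where "foldl Sub Z ws2 = jumps t' us'" "set us' \<subseteq> set us"
    "msubsts t' us' = msubsts t us" "(jump_measure t' us', jump_measure t us) \<in> measure_order"
proof -
  obtain us1 u us2 where us: "us = us1 @ u # us2"
    and ws1: "ws1 = map (lift (Suc (length us2)) 0) (jump_args us1)"
    and w: "w = lift (length us2) 0 u" and ws2: "ws2 = jump_args us2"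
    using jump_args_split[OF ws] by blast
  from rt[unfolded root_step_def] show ?thesis
  proof (elim disjE exE conjE)
    assume Z: "Z = subst (foldl Sub t ws1) 0 w"
    let ?t2 = "psubst (upsn (length us1) (substf 0 (lift (length us2) 0 u))) t"
    show ?thesis
    proof (rule that[of ?t2 "us1 @ us2"])
      show "foldl Sub Z ws2 = jumps ?t2 (us1 @ us2)"
        by (simp only: Z ws1 w ws2 erase_step_jumps)
    qed (auto simp: us msubsts_erase jump_measure_erase)
  next
    fix B' assume sp: "split 0 (foldl Sub t ws1) B'" and a: "1 \<le> occ 0 B'" and b: "1 \<le> occ 1 B'"
      and Z: "Z = Sub (Sub B' (lift 1 0 w)) w"
    obtain t' where spt: "split (length us1) t t'"
      and shape: "foldl Sub Z ws2 = jumps t' (us1 @ u # u # us2)"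
      and "occ 0 B' = occ (length us1) t'" "occ 1 B' = occ (Suc (length us1)) t'"
      using dup_step_jumps[OF sp[unfolded ws1]] Z w ws2 by metis
    with a b have "(jump_measure t' (us1 @ u # u # us2), jump_measure t us) \<in> measure_order"
      using jump_measure_dup[OF spt] us by simp
    thus ?thesis using that[OF shape] msubsts_dup[OF spt] us by auto
  qed
qed

lemma step_jumps:
  assumes st: "step (jumps t us) Y" and snu: "\<forall>u\<in>set us. SNa u"
  obtains t' us' where "Y = jumps t' us'" "\<forall>u\<in>set us'. SNa u"
    "step\<^sup>*\<^sup>* (msubsts t us) (msubsts t' us')"
    "step\<^sup>+\<^sup>+ (msubsts t us) (msubsts t' us') \<or>
        (jump_measure t' us', jump_measure t us) \<in> measure_order"
proof -
  from step_foldl_Sub[OF st[unfolded jumps_foldl]] show ?thesis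
  proof (elim disjE exE conjE)
    fix t' assume "step t t'" and Y: "Y = foldl Sub t' (jump_args us)"
    have "step (msubsts t us) (msubsts t' us)"
      using \<open>step t t'\<close> by (simp add: msubsts_psubst step_psubst)
    thus ?thesis using that[of t' us] snu Y
      by (simp add: jumps_foldl tranclp.r_into_trancl r_into_rtranclp)
  next
    fix ws1 w ws2 w' assume ws: "jump_args us = ws1 @ w # ws2" and "step w w'"
      and Y: "Y = foldl Sub t (ws1 @ w' # ws2)"
    from arg_step_jumps[OF ws this(2) snu] obtain us' where "Y = jumps t us'"
      "\<forall>u\<in>set us'. SNa u" "step\<^sup>*\<^sup>* (msubsts t us) (msubsts t us')"
      "(jump_measure t us', jump_measure t us) \<in> measure_order"
      by (metis Y)
    thus ?thesis using that by blast
  next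
    fix ws1 w ws2 Z assume ws: "jump_args us = ws1 @ w # ws2" and Y: "Y = foldl Sub Z ws2"
      and "root_step (foldl Sub t ws1) w Z"
    from root_step_jumps[OF ws this(3)] obtain t' us' where "Y = jumps t' us'"
      "set us' \<subseteq> set us" "msubsts t' us' = msubsts t us"
      "(jump_measure t' us', jump_measure t us) \<in> measure_order"
      by (metis Y)
    thus ?thesis using that[of t' us'] snu by auto
  qed
qed

lemma step_spine:
  assumes st: "step (foldl App (jumps t us) vs) X" and snu: "\<forall>u\<in>set us. SNa u"
  obtains t' us' vs' where "X = foldl App (jumps t' us') vs'" "\<forall>u\<in>set us'. SNa u"
    "step\<^sup>*\<^sup>* (foldl App (msubsts t us) vs) (foldl App (msubsts t' us') vs')"
    "step\<^sup>+\<^sup>+ (foldl App (msubsts t us) vs) (foldl App (msubsts t' us') vs') \<or>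
     (jump_measure t' us', jump_measure t us) \<in> measure_order"
proof -
  from step_foldl_App[OF st] show ?thesis
  proof (elim disjE exE conjE)
    fix Y assume "step (jumps t us) Y" and X: "X = foldl App Y vs"
    from step_jumps[OF this(1) snu] obtain t' us' where "Y = jumps t' us'" "\<forall>u\<in>set us'. SNa u"
      "step\<^sup>*\<^sup>* (msubsts t us) (msubsts t' us')"
      "step\<^sup>+\<^sup>+ (msubsts t us) (msubsts t' us') \<or>
          (jump_measure t' us', jump_measure t us) \<in> measure_order"
      by metis
    thus ?thesis
      using that[of t' us' vs] X rtranclp_map[of step "\<lambda>a. foldl App a vs"]
        tranclp_map[of step "\<lambda>a. foldl App a vs"] step_foldl_App_head by blast
  next
    fix vs1 v vs2 v' assume "vs = vs1 @ v # vs2" "step v v'"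
      and X: "X = foldl App (jumps t us) (vs1 @ v' # vs2)"
    hence "step (foldl App (msubsts t us) vs) (foldl App (msubsts t us) (vs1 @ v' # vs2))"
      using step_foldl_App_arg by simp
    thus ?thesis using that[OF X snu] by auto
  next
    fix s L v vs' assume vs: "vs = v # vs'" and jL: "jumps t us = foldl Sub (Lam s) L"
      and X: "X = foldl App (foldl Sub (Sub s (lift (length L) 0 v)) L) vs'"
    from foldl_Sub_eq_Lam[OF jL[unfolded jumps_foldl]] obtain L0 where
      L0: "L = L0 @ jump_args us" "t = foldl Sub (Lam s) L0" by blast
    define t2 where "t2 = foldl Sub (Sub s (lift (length L0 + length us) 0 v)) L0"
    have X': "X = foldl App (jumps t2 us) vs'" using X L0 by (simp add: t2_def jumps_foldl)
    let ?s = "upsn (length L0) (env us)"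
    have "psubst ?s (lift (length L0 + length us) 0 v) = lift (length L0) 0 v"
      using psubst_lift[of "length L0" "env us" "lift (length us) 0 v"]
      by (simp add: lift_lift0 psubst_env_lift del: upsn.simps)
    hence "msubsts t2 us = foldl Sub (Sub (psubst (ups ?s) s) (lift (length L0) 0 v))
        (psL (env us) L0)"
      by (simp add: t2_def msubsts_psubst psubst_foldl del: upsn.simps)
    moreover have "msubsts t us = foldl Sub (Lam (psubst (ups ?s) s)) (psL (env us) L0)"
      using L0 by (simp add: msubsts_psubst psubst_foldl del: upsn.simps)
    ultimately have "step (App (msubsts t us) v) (msubsts t2 us)"
      using step.dB[of "psubst (ups ?s) s" "psL (env us) L0" v] by simp
    hence "step (foldl App (msubsts t us) vs) (foldl App (msubsts t2 us) vs')"
      using vs step_foldl_App_head by simp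
    thus ?thesis using that[OF X' snu] by auto
  qed
qed

section \<open>The main induction\<close>

lemma tranclp_step_SN: "step\<^sup>+\<^sup>+ P P' \<Longrightarrow> SNa P \<Longrightarrow> (P', P) \<in> step_SN\<^sup>+"
proof (induction rule: tranclp_induct)
  case (base y) thus ?case by (auto simp: step_SN_def)
next
  case (step y z)
  have "SNa y" using SNa_steps[OF tranclp_into_rtranclp[OF step.hyps(1)] step.prems] .
  hence "(z, y) \<in> step_SN" using step.hyps(2) by (simp add: step_SN_def)
  thus ?case using step.IH[OF step.prems] by (rule trancl_into_trancl2)
qed

definition progress_order :: "((trm \<times> trm multiset \<times> nat) \<times> (trm \<times> trm multiset \<times> nat)) set" where
  "progress_order = step_SN\<^sup>+ <*lex*> measure_order"

lemma wf_progress_order: "wf progress_order"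
  unfolding progress_order_def by (intro wf_lex_prod wf_trancl wf_step_SN wf_measure_order)

lemma progress_orderI:
  assumes "SNa P" "step\<^sup>*\<^sup>* P P'" "step\<^sup>+\<^sup>+ P P' \<or> (m', m) \<in> measure_order"
  shows "((P', m'), (P, m)) \<in> progress_order"
proof (cases "step\<^sup>+\<^sup>+ P P'")
  case True
  thus ?thesis using tranclp_step_SN assms(1) by (simp add: progress_order_def)
next
  case False
  hence "P' = P" using rtranclpD[OF assms(2)] by blast
  thus ?thesis using False assms(3) by (simp add: progress_order_def)
qed

lemma SNa_jumps:
  "SNa (foldl App (msubsts t us) vs) \<Longrightarrow> \<forall>u\<in>set us. SNa u \<Longrightarrow> SNa (foldl App (jumps t us) vs)"
proof (induction "(foldl App (msubsts t us) vs, jump_measure t us)" arbitrary: t us vs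
    rule: wf_induct_rule[OF wf_progress_order, case_names less])
  case less
  show ?case
  proof (rule SNaI)
    fix X assume st: "step (foldl App (jumps t us) vs) X"
    obtain t' us' vs' where
      X: "X = foldl App (jumps t' us') vs'" and snu: "\<forall>u\<in>set us'. SNa u"
      and steps: "step\<^sup>*\<^sup>* (foldl App (msubsts t us) vs) (foldl App (msubsts t' us') vs')"
      and dec: "step\<^sup>+\<^sup>+ (foldl App (msubsts t us) vs) (foldl App (msubsts t' us') vs') \<or>
        (jump_measure t' us', jump_measure t us) \<in> measure_order"
      by (rule step_spine[OF st less.prems(2)])
    have sn': "SNa (foldl App (msubsts t' us') vs')" using SNa_steps[OF steps less.prems(1)] .
    have "((foldl App (msubsts t' us') vs', jump_measure t' us'),
        (foldl App (msubsts t us) vs, jump_measure t us)) \<in> progress_order"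
      by (rule progress_orderI[OF less.prems(1) steps dec])
    from less.hyps[OF this sn' snu] show "SNa X" unfolding X .
  qed
qed

theorem theorem18:
  fixes t :: trm and us vs :: "trm list"
  assumes "us \<noteq> []"
    and "\<forall>u \<in> set us. SN u"
    and "SN (foldl App (msubsts t us) vs)"
  shows "SN (foldl App (jumps t us) vs)"
proof -
  have "\<forall>u\<in>set us. SNa u" using assms(2) SN_SNa by blast
  with SN_SNa[OF assms(3)] have "SNa (foldl App (jumps t us) vs)" by (rule SNa_jumps)
  thus ?thesis by (rule SNa_SN)
qed

end
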